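(* Let $d$ be a feasible integer and let $P\in\mathbb F[\lambda]$ be any monic polynomial of degree $d$. Then there exists a standard $U_q(\widehat{\mathfrak{sl}}_2)$-module $V$ of diameter $d$ with $P_V=P$.
   Context: Let $\mathbb F$ be an algebraically closed field and fix nonzero $q\in\mathbb F$ with $q^2\ne1$; write $[n]_q=(q^n-q^{-n})/(q-q^{-1})$. $U_q(\widehat{\mathfrak{sl}}_2)$ is the associative unital $\mathbb F$-algebra with generators $e_i^{\pm},K_i^{\pm1}$ ($i\in\{0,1\}$) and relations $K_iK_i^{-1}=K_i^{-1}K_i=1$, $K_0K_1=K_1K_0$, $K_ie_i^{\pm}K_i^{-1}=q^{\pm2}e_i^{\pm}$, $K_ie_j^{\pm}K_i^{-1}=q^{\mp2}e_j^{\pm}$ ($i\ne j$), $e_i^+e_i^--e_i^-e_i^+=(K_i-K_i^{-1})/(q-q^{-1})$, $e_0^{\pm}e_1^{\mp}=e_1^{\mp}e_0^{\pm}$, and $(e_i^\pm)^3e_j^\pm-[3]_q(e_i^\pm)^2e_j^\pm e_i^\pm+[3]_qe_i^\pm e_j^\pm(e_i^\pm)^2-e_j^\pm(e_i^\pm)^3=0$ ($i\ne j$). Tensor products of modules are formed via $e_i^+(v\otimes w)=e_i^+v\otimes K_iw+v\otimes e_i^+w$, $e_i^-(v\otimes w)=e_i^-v\otimes w+K_i^{-1}v\otimes e_i^-w$, $K_i(v\otimes w)=K_iv\otimes K_iw$. For nonzero $\alpha\in\mathbb F$, $V(\alpha)$ is the module with basis $x,y$ and $K_1x=qx$, $K_1y=q^{-1}y$,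 $e_1^-x=y$, $e_1^-y=0$, $e_1^+x=0$, $e_1^+y=x$, $K_0x=q^{-1}x$, $K_0y=qy$, $e_0^-x=0$, $e_0^-y=q\alpha^{-1}x$, $e_0^+x=q^{-1}\alpha y$, $e_0^+y=0$. A standard module of diameter $d$ is $V(\alpha_1)\otimes\cdots\otimes V(\alpha_d)$ with all $\alpha_i\in\mathbb F$ nonzero (for $d=0$: the trivial module, on which each $e_i^\pm$ acts as $0$ and each $K_i^{\pm1}$ as $1$). An integer $d$ is feasible if $d\ge0$ and $q^{2i}\ne1$ for $1\le i\le d$. For a standard $V$ of diameter $d$, $U_0$ is the $1$-dimensional span of $x\otimes\cdots\otimes x$. Fix nonzero $b,c,b^*,c^*\in\mathbb F$ and $u,v,u^*,v^*\in\mathbb F$ with $uv^*=-bb^*q^{-1}(q-q^{-1})^2$ and $vu^*=-cc^*q^{-1}(q-q^{-1})^2$; set $R=ue_0^++ve_1^-K_1$ and $L=u^*e_1^++v^*e_0^-K_0$. For a standard module $V$ of feasible diameter $d$ and $0\le i\le d$, $\zeta_i$ is the scalar by which $L^iR^i$ acts on $U_0$, and $\sigma_i=\zeta_i/\prod_{k=1}^i(q^k-q^{-k})^2$. For $i\ge0$ let $f_i=bb^*q^{-2i}+cc^*q^{2i}-\lambda\in\mathbb F[\lambda]$. The Drinfel'd polynomial of $V$ is the monic degree-$d$ polynomial $P_V=(-1)^d\sum_{i=0}^d\sigma_{d-i}f_0f_1\cdots f_{i-1}$. *)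

theory Defs
  imports "HOL-Computational_Algebra.Polynomial"
begin

text \<open>Vectors of the standard module V(al_1) (x) ... (x) V(al_d) are represented as
  coefficient functions on basis words: a word is a bool list of length d,
  True standing for x and False for y in the corresponding tensor factor
  (head of the list = first factor).  Index i :: nat is 0 or 1.\<close>

definition bvec :: "bool list \<Rightarrow> bool list \<Rightarrow> 'a::field" where
  "bvec w = (\<lambda>u. if u = w then 1 else 0)"

text \<open>Eigenvalue of K_i on x (True) and y (False) in V(al).\<close>
definition keig :: "'a::field \<Rightarrow> nat \<Rightarrow> bool \<Rightarrow> 'a" where
  "keig q i a = (if i = 1 then (if a then q else inverse q) else (if a then inverse q else q))"

definition Kw :: "'a::field \<Rightarrow> nat \<Rightarrow> bool list \<Rightarrow> 'a" where
  "Kw q i w = prod_list (map (keig q i) w)"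

text \<open>Action of e_i^+ and e_i^- on the basis vector a of V(al), as a vector of V(al).\<close>
definition ep1 :: "'a::field \<Rightarrow> nat \<Rightarrow> 'a \<Rightarrow> bool \<Rightarrow> bool \<Rightarrow> 'a" where
  "ep1 q i al a = (\<lambda>b. if i = 1 then (if \<not> a \<and> b then 1 else 0)
                         else (if a \<and> \<not> b then inverse q * al else 0))"

definition em1 :: "'a::field \<Rightarrow> nat \<Rightarrow> 'a \<Rightarrow> bool \<Rightarrow> bool \<Rightarrow> 'a" where
  "em1 q i al a = (\<lambda>b. if i = 1 then (if a \<and> \<not> b then 1 else 0)
                         else (if \<not> a \<and> b then q * inverse al else 0))"

text \<open>Action of e_i^+ and e_i^- on the basis word w of V(al_1) (x) ... (x) V(al_d),
  via the coproduct: e^+(v(x)w) = e^+v (x) K w + v (x) e^+ w,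
  e^-(v(x)w) = e^-v (x) w + K^{-1}v (x) e^- w.\<close>
fun ep :: "'a::field \<Rightarrow> nat \<Rightarrow> 'a list \<Rightarrow> bool list \<Rightarrow> bool list \<Rightarrow> 'a" where
  "ep q i (al # als) (a # w) =
     (\<lambda>t. case t of [] \<Rightarrow> 0
        | b # u \<Rightarrow> ep1 q i al a b * (if u = w then Kw q i w else 0)
                 + (if b = a then 1 else 0) * ep q i als w u)"
| "ep q i _ _ = (\<lambda>t. 0)"

fun em :: "'a::field \<Rightarrow> nat \<Rightarrow> 'a list \<Rightarrow> bool list \<Rightarrow> bool list \<Rightarrow> 'a" where
  "em q i (al # als) (a # w) =
     (\<lambda>t. case t of [] \<Rightarrow> 0
        | b # u \<Rightarrow> em1 q i al a b * (if u = w then 1 else 0)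
                 + (if b = a then inverse (keig q i a) else 0) * em q i als w u)"
| "em q i _ _ = (\<lambda>t. 0)"

definition apply_op :: "nat \<Rightarrow> (bool list \<Rightarrow> bool list \<Rightarrow> 'a::field) \<Rightarrow> (bool list \<Rightarrow> 'a) \<Rightarrow> bool list \<Rightarrow> 'a" where
  "apply_op d A f = (\<lambda>t. \<Sum>w\<in>{w. length w = d}. f w * A w t)"

definition Rop :: "'a::field \<Rightarrow> 'a \<Rightarrow> 'a \<Rightarrow> 'a list \<Rightarrow> bool list \<Rightarrow> bool list \<Rightarrow> 'a" where
  "Rop q u v als w = (\<lambda>t. u * ep q 0 als w t + v * Kw q 1 w * em q 1 als w t)"

definition Lop :: "'a::field \<Rightarrow> 'a \<Rightarrow> 'a \<Rightarrow> 'a list \<Rightarrow> bool list \<Rightarrow> bool list \<Rightarrow> 'a" where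
  "Lop q us vs als w = (\<lambda>t. us * ep q 1 als w t + vs * Kw q 0 w * em q 0 als w t)"

text \<open>zeta_i: the scalar by which L^i R^i acts on U_0 = span(x (x) ... (x) x), read off as
  the coefficient of x(x)...(x)x in L^i R^i (x(x)...(x)x).\<close>
definition zeta :: "'a::field \<Rightarrow> 'a \<Rightarrow> 'a \<Rightarrow> 'a \<Rightarrow> 'a \<Rightarrow> 'a list \<Rightarrow> nat \<Rightarrow> 'a" where
  "zeta q u v us vs als i =
     (let d = length als; x0 = replicate d True in
      ((apply_op d (Lop q us vs als) ^^ i) ((apply_op d (Rop q u v als) ^^ i) (bvec x0))) x0)"

definition sigma :: "'a::field \<Rightarrow> 'a \<Rightarrow> 'a \<Rightarrow> 'a \<Rightarrow> 'a \<Rightarrow> 'a list \<Rightarrow> nat \<Rightarrow> 'a" where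
  "sigma q u v us vs als i =
     zeta q u v us vs als i / (\<Prod>k=1..i. (q ^ k - inverse q ^ k) ^ 2)"

definition fpoly :: "'a::field \<Rightarrow> 'a \<Rightarrow> 'a \<Rightarrow> 'a \<Rightarrow> 'a \<Rightarrow> nat \<Rightarrow> 'a poly" where
  "fpoly q b c bs cs i = [: b * bs * inverse q ^ (2 * i) + c * cs * q ^ (2 * i), -1 :]"

definition drinfeld_poly ::
  "'a::field \<Rightarrow> 'a \<Rightarrow> 'a \<Rightarrow> 'a \<Rightarrow> 'a \<Rightarrow> 'a \<Rightarrow> 'a \<Rightarrow> 'a \<Rightarrow> 'a \<Rightarrow> 'a list \<Rightarrow> 'a poly" where
  "drinfeld_poly q b c bs cs u v us vs als =
     (let d = length als in
      smult ((-1) ^ d)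
        (\<Sum>i=0..d. smult (sigma q u v us vs als (d - i)) (\<Prod>j<i. fpoly q b c bs cs j)))"

definition feasible :: "'a::field \<Rightarrow> nat \<Rightarrow> bool" where
  "feasible q d \<longleftrightarrow> (\<forall>i\<in>{1..d}. q ^ (2 * i) \<noteq> 1)"

end

theory Submission
  imports Defs
begin

text \<open>
  For W standard of diameter m and al /= 0 we show that the Drinfel'd
  polynomial of V(al) (x) W is (lambda - r(al)) P_W, where
  r(al) = (u u^* q^-1 al + v v^* q^3 al^-1) / (q - q^-1)^2.
  The operators R and L are block triangular with respect to the first tensor factor:
  R(x (x) g) = x (x) Rg + y (x) Mg and R(y (x) g) = y (x) Rg, symmetrically for L, where M
  is a combination of K_0 and K_1.  Since R and L shift K-weights by fixed factors, M acts
  on the iterates R^j w_0 by scalars, and iterating gives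
  zeta_(i+1)(V(al) (x) W) = zeta_(i+1)(W) + C_i D_i zeta_i(W) with explicit geometric sums
  C_i, D_i.  Evaluating C_i D_i = (q^(i+1) - q^-(i+1))^2 (r(al) - theta_(m-i)), where
  theta_k is the root of f_k, turns this into a recursion for sigma, which is exactly the
  coefficient recursion of (lambda - r(al)) P_W in the basis f_0 ... f_(i-1).
  Finally, r attains every value at some al /= 0 (a quadratic equation), so factoring the
  given monic P into linear factors and choosing one al per root realizes P.
\<close>

lemma finite_words: "finite {w :: bool list. length w = n}"
  using finite_lists_length_eq[of "UNIV :: bool set" n] by simp

lemma sum_words_Suc:
  "(\<Sum>w\<in>{w :: bool list. length w = Suc m}. h w)
     = (\<Sum>w\<in>{w. length w = m}. h (True # w)) + (\<Sum>w\<in>{w. length w = m}. h (False # w))"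
proof -
  have split: "{w :: bool list. length w = Suc m}
      = Cons True ` {w. length w = m} \<union> Cons False ` {w. length w = m}"
    by (auto simp: length_Suc_conv image_iff)
  show ?thesis
    unfolding split by (subst sum.union_disjoint) (auto simp: finite_words sum.reindex)
qed

lemma sum_words_delta:
  assumes "length u = m"
  shows "(\<Sum>w\<in>{w :: bool list. length w = m}. g w * (if u = w then X w else (0::'a::field))) = g u * X u"
proof -
  have "(\<Sum>w\<in>{w :: bool list. length w = m}. g w * (if u = w then X w else 0))
      = (\<Sum>w\<in>{w :: bool list. length w = m}. if u = w then g w * X w else 0)"
    by (rule sum.cong) auto
  then show ?thesis using assms by (simp add: finite_words)
qed

lemma apply_op_lin:
  "apply_op n A (\<lambda>t. f t + c * g t) = (\<lambda>t. apply_op n A f t + c * apply_op n A (g :: bool list \<Rightarrow> 'a::field) t)"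
  by (rule ext) (simp add: apply_op_def algebra_simps sum.distrib sum_distrib_left)

lemma apply_op_pow_lin:
  "(apply_op n A ^^ k) (\<lambda>t. f t + c * g t)
     = (\<lambda>t. (apply_op n A ^^ k) f t + c * (apply_op n A ^^ k) (g :: bool list \<Rightarrow> 'a::field) t)"
  by (induction k) (simp_all add: apply_op_lin)

lemma apply_op_cong:
  "(\<And>t. length t = n \<Longrightarrow> f t = g t) \<Longrightarrow> apply_op n A f = apply_op n A (g :: bool list \<Rightarrow> 'a::field)"
  by (rule ext) (simp add: apply_op_def)

lemma apply_op_pow_cong:
  "(\<And>t. length t = n \<Longrightarrow> f t = g t) \<Longrightarrow>
     (apply_op n A ^^ Suc k) f = (apply_op n A ^^ Suc k) (g :: bool list \<Rightarrow> 'a::field)"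
  by (simp only: funpow_Suc_right comp_def apply_op_cong[of n f g A])

lemma apply_op_pow_zero: "(apply_op n A ^^ k) (\<lambda>t. 0) = (\<lambda>t. (0::'a::field))"
  by (induction k) (simp_all add: apply_op_def)

section \<open>Weights: the action of K_0 and K_1\<close>

lemma Kw_Nil [simp]: "Kw q i [] = 1"
  by (simp add: Kw_def)

lemma Kw_Cons [simp]: "Kw q i (a # w) = keig q i a * Kw q i w"
  by (simp add: Kw_def)

definition K_eigen :: "'a::field \<Rightarrow> nat \<Rightarrow> (bool list \<Rightarrow> 'a) \<Rightarrow> 'a \<Rightarrow> bool" where
  "K_eigen q j f k \<longleftrightarrow> (\<forall>t. Kw q j t * f t = k * f t)"

definition K_shift :: "'a::field \<Rightarrow> nat \<Rightarrow> (bool list \<Rightarrow> bool list \<Rightarrow> 'a) \<Rightarrow> 'a \<Rightarrow> bool" where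
  "K_shift q j A c \<longleftrightarrow> (\<forall>w t. Kw q j t * A w t = c * Kw q j w * A w t)"

lemma ep_K_shift:
  assumes "q \<noteq> (0::'a::field)"
  shows "K_shift q j (ep q i als) (if (i = 1) = (j = 1) then q^2 else inverse q^2)"
  unfolding K_shift_def
proof (intro allI)
  fix w t
  show "Kw q j t * ep q i als w t = (if (i = 1) = (j = 1) then q^2 else inverse q^2) * Kw q j w * ep q i als w t"
  proof (induction q i als w arbitrary: t rule: ep.induct)
    case (1 q i al als a w)
    show ?case
    proof (cases t)
      case (Cons b u)
      have "keig q j b * ep1 q i al a b
          = (if (i = 1) = (j = 1) then q^2 else inverse q^2) * keig q j a * ep1 q i al a b"
        using assms by (cases a; cases b; auto simp: keig_def ep1_def field_simps power2_eq_square)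
      then show ?thesis using Cons 1[of u] by (auto simp: algebra_simps)
    qed simp
  qed auto
qed

lemma em_K_shift:
  assumes "q \<noteq> (0::'a::field)"
  shows "K_shift q j (em q i als) (if (i = 1) = (j = 1) then inverse q^2 else q^2)"
  unfolding K_shift_def
proof (intro allI)
  fix w t
  show "Kw q j t * em q i als w t = (if (i = 1) = (j = 1) then inverse q^2 else q^2) * Kw q j w * em q i als w t"
  proof (induction q i als w arbitrary: t rule: em.induct)
    case (1 q i al als a w)
    show ?case
    proof (cases t)
      case (Cons b u)
      have "keig q j b * em1 q i al a b
          = (if (i = 1) = (j = 1) then inverse q^2 else q^2) * keig q j a * em1 q i al a b"
        using assms by (cases a; cases b; auto simp: keig_def em1_def field_simps power2_eq_square)
      then show ?thesis using Cons 1[of u] by (auto simp: algebra_simps)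
    qed simp
  qed auto
qed

lemma K_shift_combine:
  assumes A: "K_shift q j A c" and B: "K_shift q j B c"
  shows "K_shift q j (\<lambda>w t. f w * A w t + g w * B w t) c"
  unfolding K_shift_def
proof (intro allI)
  fix w t
  have "Kw q j t * (f w * A w t + g w * B w t) = f w * (Kw q j t * A w t) + g w * (Kw q j t * B w t)"
    by (simp add: algebra_simps)
  also have "\<dots> = c * Kw q j w * (f w * A w t + g w * B w t)"
    using A B unfolding K_shift_def by (simp only:) (simp add: algebra_simps)
  finally show "Kw q j t * (f w * A w t + g w * B w t) = c * Kw q j w * (f w * A w t + g w * B w t)" .
qed

lemma Rop_K_shift:
  assumes q: "q \<noteq> (0::'a::field)"
  shows "K_shift q j (Rop q u v als) (if j = 1 then inverse q^2 else q^2)"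
proof -
  have "Rop q u v als = (\<lambda>w t. u * ep q 0 als w t + (v * Kw q 1 w) * em q 1 als w t)"
    by (auto simp: Rop_def mult.assoc)
  moreover have "K_shift q j (ep q 0 als) (if j = 1 then inverse q^2 else q^2)"
    using ep_K_shift[OF q, of j 0 als] by (cases "j = 1") simp_all
  moreover have "K_shift q j (em q 1 als) (if j = 1 then inverse q^2 else q^2)"
    using em_K_shift[OF q, of j 1 als] by (cases "j = 1") simp_all
  ultimately show ?thesis by (simp add: K_shift_combine)
qed

lemma Lop_K_shift:
  assumes q: "q \<noteq> (0::'a::field)"
  shows "K_shift q j (Lop q us vs als) (if j = 1 then q^2 else inverse q^2)"
proof -
  have "Lop q us vs als = (\<lambda>w t. us * ep q 1 als w t + (vs * Kw q 0 w) * em q 0 als w t)"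
    by (auto simp: Lop_def mult.assoc)
  moreover have "K_shift q j (ep q 1 als) (if j = 1 then q^2 else inverse q^2)"
    using ep_K_shift[OF q, of j 1 als] by (cases "j = 1") simp_all
  moreover have "K_shift q j (em q 0 als) (if j = 1 then q^2 else inverse q^2)"
    using em_K_shift[OF q, of j 0 als] by (cases "j = 1") simp_all
  ultimately show ?thesis by (simp add: K_shift_combine)
qed

lemma K_eigen_apply:
  assumes f: "K_eigen q j f k" and A: "K_shift q j A c"
  shows "K_eigen q j (apply_op n A f) (c * k)"
  unfolding K_eigen_def
proof
  fix t
  have "Kw q j t * apply_op n A f t = (\<Sum>w\<in>{w. length w = n}. f w * (Kw q j t * A w t))"
    by (simp add: apply_op_def sum_distrib_left algebra_simps)
  also have "\<dots> = (\<Sum>w\<in>{w. length w = n}. c * (Kw q j w * f w) * A w t)"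
    using A unfolding K_shift_def by (simp only:) (simp add: algebra_simps)
  also have "\<dots> = (\<Sum>w\<in>{w. length w = n}. c * (k * f w) * A w t)"
    using f unfolding K_eigen_def by (simp only:)
  also have "\<dots> = c * k * apply_op n A f t"
    by (simp add: apply_op_def sum_distrib_left algebra_simps)
  finally show "Kw q j t * apply_op n A f t = c * k * apply_op n A f t" .
qed

lemma K_eigen_apply_pow:
  assumes "K_eigen q j f k" and "K_shift q j A c"
  shows "K_eigen q j ((apply_op n A ^^ i) f) (c^i * k)"
  by (induction i) (simp_all add: assms K_eigen_apply[OF _ assms(2)] mult.assoc)

lemma K_eigen_top:
  "K_eigen q j (bvec (replicate m True)) (if j = 1 then q^m else inverse q^m)"
  unfolding K_eigen_def bvec_def by (auto simp: Kw_def keig_def)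

lemma K_eigen_combination:
  assumes "K_eigen q 0 h k0" and "K_eigen q 1 h k1"
  shows "h w * (c0 * Kw q 0 w + c1 * Kw q 1 w) = (c0 * k0 + c1 * k1) * h w"
proof -
  have "h w * (c0 * Kw q 0 w + c1 * Kw q 1 w) = c0 * (Kw q 0 w * h w) + c1 * (Kw q 1 w * h w)"
    by (simp add: algebra_simps)
  then show ?thesis using assms unfolding K_eigen_def by (simp only:) (simp add: algebra_simps)
qed

section \<open>Splitting off the first tensor factor\<close>

text \<open>The vector x (x) g (for a = True) or y (x) g (for a = False) of V(al) (x) W,
  where g is a vector of W.\<close>
definition first_tensor :: "bool \<Rightarrow> (bool list \<Rightarrow> 'a::field) \<Rightarrow> bool list \<Rightarrow> 'a" where
  "first_tensor a g = (\<lambda>t. case t of [] \<Rightarrow> 0 | b # u \<Rightarrow> if b = a then g u else 0)"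

lemma first_tensor_Cons [simp]: "first_tensor a g (b # u) = (if b = a then g u else 0)"
  by (simp add: first_tensor_def)

lemma first_tensor_scale: "first_tensor a (\<lambda>w. c * h w) t = c * first_tensor a h t"
  by (cases t) (auto simp: first_tensor_def)

lemma top_vector_Suc: "bvec (replicate (Suc m) True) = first_tensor True (bvec (replicate m True))"
  by (rule ext) (auto simp: bvec_def first_tensor_def split: list.splits)

lemma Rop_Cons: "Rop q u v (al # als) (a # w) (b # x) =
   u * (ep1 q 0 al a b * (if x = w then Kw q 0 w else 0) + (if b = a then 1 else 0) * ep q 0 als w x)
 + v * keig q 1 a * Kw q 1 w * (em1 q 1 al a b * (if x = w then 1 else 0)
     + (if b = a then inverse (keig q 1 a) else 0) * em q 1 als w x)"
  by (simp add: Rop_def)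

lemma Lop_Cons: "Lop q u v (al # als) (a # w) (b # x) =
   u * (ep1 q 1 al a b * (if x = w then Kw q 1 w else 0) + (if b = a then 1 else 0) * ep q 1 als w x)
 + v * keig q 0 a * Kw q 0 w * (em1 q 0 al a b * (if x = w then 1 else 0)
     + (if b = a then inverse (keig q 0 a) else 0) * em q 0 als w x)"
  by (simp add: Lop_def)

lemma Rop_Cons_block:
  assumes "q \<noteq> (0::'a::field)"
  shows "Rop q u v (al # als) (True # w) (True # x) = Rop q u v als w x"
    "Rop q u v (al # als) (False # w) (False # x) = Rop q u v als w x"
    "Rop q u v (al # als) (False # w) (True # x) = 0"
  using assms by (simp_all add: Rop_Cons ep1_def em1_def keig_def Rop_def field_simps)

lemma Lop_Cons_block:
  assumes "q \<noteq> (0::'a::field)"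
  shows "Lop q u v (al # als) (True # w) (True # x) = Lop q u v als w x"
    "Lop q u v (al # als) (False # w) (False # x) = Lop q u v als w x"
    "Lop q u v (al # als) (True # w) (False # x) = 0"
  using assms by (simp_all add: Lop_Cons ep1_def em1_def keig_def Lop_def field_simps)

lemma Rop_first_x:
  assumes q: "q \<noteq> (0::'a::field)" and len: "length t = Suc m"
  shows "apply_op (Suc m) (Rop q u v (al # als)) (first_tensor True g) t =
    first_tensor True (apply_op m (Rop q u v als) g) t
    + first_tensor False (\<lambda>w. g w * (u * inverse q * al * Kw q 0 w + v * q * Kw q 1 w)) t"
proof -
  obtain b x where t: "t = b # x" and lx: "length x = m" using len by (cases t) auto
  have "apply_op (Suc m) (Rop q u v (al # als)) (first_tensor True g) t
      = (\<Sum>w\<in>{w. length w = m}. g w * Rop q u v (al # als) (True # w) (b # x))"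
    by (simp add: apply_op_def sum_words_Suc t)
  also have "\<dots> = first_tensor True (apply_op m (Rop q u v als) g) t
      + first_tensor False (\<lambda>w. g w * (u * inverse q * al * Kw q 0 w + v * q * Kw q 1 w)) t"
  proof (cases b)
    case True
    then show ?thesis using q by (simp add: t Rop_Cons_block apply_op_def)
  next
    case False
    have "(\<Sum>w\<in>{w. length w = m}. g w * Rop q u v (al # als) (True # w) (b # x))
      = (\<Sum>w\<in>{w. length w = m}. g w * (if x = w then u * inverse q * al * Kw q 0 w + v * q * Kw q 1 w else 0))"
      by (rule sum.cong) (auto simp: False Rop_Cons ep1_def em1_def keig_def)
    then show ?thesis by (simp add: t False sum_words_delta[OF lx])
  qed
  finally show ?thesis .
qed

lemma Rop_first_y:
  assumes q: "q \<noteq> (0::'a::field)" and len: "length t = Suc m"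
  shows "apply_op (Suc m) (Rop q u v (al # als)) (first_tensor False g) t
       = first_tensor False (apply_op m (Rop q u v als) g) t"
proof -
  obtain b x where t: "t = b # x" using len by (cases t) auto
  show ?thesis
    using q by (cases b) (simp_all add: t apply_op_def sum_words_Suc Rop_Cons_block)
qed

lemma Lop_first_x:
  assumes q: "q \<noteq> (0::'a::field)" and len: "length t = Suc m"
  shows "apply_op (Suc m) (Lop q u v (al # als)) (first_tensor True g) t
       = first_tensor True (apply_op m (Lop q u v als) g) t"
proof -
  obtain b x where t: "t = b # x" using len by (cases t) auto
  show ?thesis
    using q by (cases b) (simp_all add: t apply_op_def sum_words_Suc Lop_Cons_block)
qed

lemma Lop_first_y:
  assumes q: "q \<noteq> (0::'a::field)" and len: "length t = Suc m"
  shows "apply_op (Suc m) (Lop q u v (al # als)) (first_tensor False g) t =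
    first_tensor False (apply_op m (Lop q u v als) g) t
    + first_tensor True (\<lambda>w. g w * (v * q * q * inverse al * Kw q 0 w + u * Kw q 1 w)) t"
proof -
  obtain b x where t: "t = b # x" and lx: "length x = m" using len by (cases t) auto
  have "apply_op (Suc m) (Lop q u v (al # als)) (first_tensor False g) t
      = (\<Sum>w\<in>{w. length w = m}. g w * Lop q u v (al # als) (False # w) (b # x))"
    by (simp add: apply_op_def sum_words_Suc t)
  also have "\<dots> = first_tensor False (apply_op m (Lop q u v als) g) t
      + first_tensor True (\<lambda>w. g w * (v * q * q * inverse al * Kw q 0 w + u * Kw q 1 w)) t"
  proof (cases b)
    case False
    then show ?thesis using q by (simp add: t Lop_Cons_block apply_op_def)
  next
    case True
    have "(\<Sum>w\<in>{w. length w = m}. g w * Lop q u v (al # als) (False # w) (b # x))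
      = (\<Sum>w\<in>{w. length w = m}. g w * (if x = w then v * q * q * inverse al * Kw q 0 w + u * Kw q 1 w else 0))"
      by (rule sum.cong) (auto simp: True Lop_Cons ep1_def em1_def keig_def)
    then show ?thesis by (simp add: t True sum_words_delta[OF lx])
  qed
  finally show ?thesis .
qed

lemma iterate_first_invariant:
  assumes T: "\<And>g t. length t = Suc m \<Longrightarrow>
      apply_op (Suc m) A (first_tensor b g) t = first_tensor b (apply_op m A' g) t"
  shows "length t = Suc m \<Longrightarrow>
    (apply_op (Suc m) A ^^ i) (first_tensor b g) t = first_tensor b ((apply_op m A' ^^ i) g) t"
proof (induction i arbitrary: t)
  case (Suc i)
  have "(apply_op (Suc m) A ^^ Suc i) (first_tensor b g)
      = apply_op (Suc m) A ((apply_op (Suc m) A ^^ i) (first_tensor b g))" by simp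
  also have "\<dots> = apply_op (Suc m) A (first_tensor b ((apply_op m A' ^^ i) g))"
    by (rule apply_op_cong) (rule Suc.IH)
  finally show ?case using T[OF Suc.prems] by simp
qed simp

lemma iterate_first_triangular:
  assumes diag: "\<And>g t. length t = Suc m \<Longrightarrow>
      apply_op (Suc m) A (first_tensor a g) t
        = first_tensor a (apply_op m A' g) t + first_tensor b (\<lambda>w. g w * M w) t"
    and off: "\<And>g t. length t = Suc m \<Longrightarrow>
      apply_op (Suc m) A (first_tensor b g) t = first_tensor b (apply_op m A' g) t"
    and eig: "\<And>j w. (apply_op m A' ^^ j) g w * M w = \<mu> j * (apply_op m A' ^^ j) g w"
  shows "length t = Suc m \<Longrightarrow>
    (apply_op (Suc m) A ^^ Suc i) (first_tensor a g) t
      = first_tensor a ((apply_op m A' ^^ Suc i) g) t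
        + (\<Sum>j<Suc i. \<mu> j) * first_tensor b ((apply_op m A' ^^ i) g) t"
proof (induction i arbitrary: t)
  case 0
  have "(\<lambda>w. g w * M w) = (\<lambda>w. \<mu> 0 * g w)" using eig[of 0] by (simp only: funpow_0)
  then show ?case using diag[OF 0] by (simp add: first_tensor_scale)
next
  case (Suc i)
  define T where "T = apply_op (Suc m) A"
  define T' where "T' = apply_op m A'"
  define C where "C = (\<Sum>j<Suc i. \<mu> j)"
  have "(T ^^ Suc (Suc i)) (first_tensor a g)
      = T (\<lambda>t. first_tensor a ((T' ^^ Suc i) g) t + C * first_tensor b ((T' ^^ i) g) t)"
    unfolding T_def funpow.simps(2) comp_def
    by (rule apply_op_cong) (use Suc.IH in \<open>simp add: T'_def C_def\<close>)
  also have "\<dots> = (\<lambda>t. T (first_tensor a ((T' ^^ Suc i) g)) t + C * T (first_tensor b ((T' ^^ i) g)) t)"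
    unfolding T_def by (rule apply_op_lin)
  finally have split: "(T ^^ Suc (Suc i)) (first_tensor a g) t
      = T (first_tensor a ((T' ^^ Suc i) g)) t + C * T (first_tensor b ((T' ^^ i) g)) t" by simp
  have "(\<lambda>w. (T' ^^ Suc i) g w * M w) = (\<lambda>w. \<mu> (Suc i) * (T' ^^ Suc i) g w)"
    using eig unfolding T'_def by blast
  then have "T (first_tensor a ((T' ^^ Suc i) g)) t
      = first_tensor a ((T' ^^ Suc (Suc i)) g) t + \<mu> (Suc i) * first_tensor b ((T' ^^ Suc i) g) t"
    using diag[OF Suc.prems] unfolding T_def T'_def by (simp add: first_tensor_scale)
  moreover have "T (first_tensor b ((T' ^^ i) g)) t = first_tensor b ((T' ^^ Suc i) g) t"
    using off[OF Suc.prems] unfolding T_def T'_def by simp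
  ultimately have "(T ^^ Suc (Suc i)) (first_tensor a g) t = first_tensor a ((T' ^^ Suc (Suc i)) g) t
      + (C + \<mu> (Suc i)) * first_tensor b ((T' ^^ Suc i) g) t"
    unfolding split by (simp add: algebra_simps del: funpow.simps)
  then show ?case by (simp add: T_def T'_def C_def del: funpow.simps)
qed

section \<open>The recursion for zeta\<close>

text \<open>Sums of the form sum_{j<=i} (a q^2j X + b q^-2j Y) produced by the block-triangular
  iteration.\<close>
definition geo_coeff :: "'a::field \<Rightarrow> 'a \<Rightarrow> 'a \<Rightarrow> 'a \<Rightarrow> 'a \<Rightarrow> nat \<Rightarrow> 'a" where
  "geo_coeff q a b X Y i = (\<Sum>j<Suc i. a * ((q^2)^j * X) + b * ((inverse q^2)^j * Y))"

lemma zeta_0: "zeta q u v us vs als 0 = 1"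
  by (simp add: zeta_def bvec_def)

text \<open>For V = V(al) (x) W with W of diameter m and x_0 = x (x) w_0 the top vector:
  R^(i+1) x_0 = x (x) R^(i+1) w_0 + C y (x) R^i w_0; L^(i+1) acts on x (x) W as on W,
  and sends y (x) R^i w_0 to y (x) L^(i+1) R^i w_0 + D x (x) L^i R^i w_0.  Reading off
  the x_0-coefficient gives the recursion.\<close>
lemma zeta_Cons:
  assumes q: "q \<noteq> (0::'a::field)" and m: "length als = m"
  shows "zeta q u v us vs (al # als) (Suc i) = zeta q u v us vs als (Suc i)
     + geo_coeff q (u * inverse q * al) (v * q) (inverse q^m) (q^m) i
       * geo_coeff q us (vs * q * q * inverse al) ((inverse q^2)^i * q^m) ((q^2)^i * inverse q^m) i
       * zeta q u v us vs als i"
proof -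
  define R where "R = apply_op (Suc m) (Rop q u v (al # als))"
  define R' where "R' = apply_op m (Rop q u v als)"
  define L where "L = apply_op (Suc m) (Lop q us vs (al # als))"
  define L' where "L' = apply_op m (Lop q us vs als)"
  define w0 where "w0 = (bvec (replicate m True) :: bool list \<Rightarrow> 'a)"
  define x0 where "x0 = True # replicate m True"
  define C where "C = geo_coeff q (u * inverse q * al) (v * q) (inverse q^m) (q^m) i"
  define D where "D = geo_coeff q us (vs * q * q * inverse al) ((inverse q^2)^i * q^m) ((q^2)^i * inverse q^m) i"
  have lx0: "length x0 = Suc m" by (simp add: x0_def)
  have weight0: "K_eigen q 0 ((R' ^^ j) w0) ((q^2)^j * inverse q^m)" for j
    using K_eigen_apply_pow[OF K_eigen_top[of q 0 m] Rop_K_shift[OF q, of 0 u v als], where n = m and i = j]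
    by (simp add: R'_def w0_def)
  have weight1: "K_eigen q 1 ((R' ^^ j) w0) ((inverse q^2)^j * q^m)" for j
    using K_eigen_apply_pow[OF K_eigen_top[of q 1 m] Rop_K_shift[OF q, of 1 u v als], where n = m and i = j]
    by (simp add: R'_def w0_def)
  have raise: "(R ^^ Suc i) (first_tensor True w0) t
      = first_tensor True ((R' ^^ Suc i) w0) t + C * first_tensor False ((R' ^^ i) w0) t"
    if "length t = Suc m" for t
    unfolding R_def R'_def C_def geo_coeff_def
  proof (rule iterate_first_triangular[OF Rop_first_x[OF q] Rop_first_y[OF q] _ that])
    show "(apply_op m (Rop q u v als) ^^ j) w0 w * (u * inverse q * al * Kw q 0 w + v * q * Kw q 1 w)
        = (u * inverse q * al * ((q^2)^j * inverse q^m) + v * q * ((inverse q^2)^j * q^m))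
          * (apply_op m (Rop q u v als) ^^ j) w0 w" for j w
      using K_eigen_combination[OF weight0 weight1] by (simp add: R'_def)
  qed
  have Lweight0: "K_eigen q 0 ((L' ^^ j) ((R' ^^ i) w0)) ((inverse q^2)^j * ((q^2)^i * inverse q^m))" for j
    using K_eigen_apply_pow[OF weight0[of i] Lop_K_shift[OF q, of 0 us vs als], where n = m and i = j] by (simp add: L'_def)
  have Lweight1: "K_eigen q 1 ((L' ^^ j) ((R' ^^ i) w0)) ((q^2)^j * ((inverse q^2)^i * q^m))" for j
    using K_eigen_apply_pow[OF weight1[of i] Lop_K_shift[OF q, of 1 us vs als], where n = m and i = j] by (simp add: L'_def)
  have lower: "(L ^^ Suc i) (first_tensor False ((R' ^^ i) w0)) x0
      = first_tensor False ((L' ^^ Suc i) ((R' ^^ i) w0)) x0 + D * first_tensor True ((L' ^^ i) ((R' ^^ i) w0)) x0"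
    unfolding L_def L'_def D_def geo_coeff_def
  proof (rule iterate_first_triangular[OF Lop_first_y[OF q] Lop_first_x[OF q] _ lx0])
    show "(apply_op m (Lop q us vs als) ^^ j) ((R' ^^ i) w0) w * (vs * q * q * inverse al * Kw q 0 w + us * Kw q 1 w)
        = (us * ((q^2)^j * ((inverse q^2)^i * q^m)) + vs * q * q * inverse al * ((inverse q^2)^j * ((q^2)^i * inverse q^m)))
          * (apply_op m (Lop q us vs als) ^^ j) ((R' ^^ i) w0) w" for j w
      using K_eigen_combination[OF Lweight0[of j] Lweight1[of j], of w "vs * q * q * inverse al" us]
      unfolding L'_def by (simp only: add.commute)
  qed
  have keep: "(L ^^ Suc i) (first_tensor True ((R' ^^ Suc i) w0)) x0
      = first_tensor True ((L' ^^ Suc i) ((R' ^^ Suc i) w0)) x0"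
    unfolding L_def L'_def by (rule iterate_first_invariant[OF Lop_first_x[OF q] lx0])
  have zeta_W: "zeta q u v us vs als n = (L' ^^ n) ((R' ^^ n) w0) (replicate m True)" for n
    by (simp add: zeta_def Let_def m L'_def R'_def w0_def)
  have "zeta q u v us vs (al # als) (Suc i) = (L ^^ Suc i) ((R ^^ Suc i) (first_tensor True w0)) x0"
    by (simp add: zeta_def Let_def m L_def R_def w0_def x0_def top_vector_Suc[symmetric] del: funpow.simps replicate.simps)
      (simp add: x0_def)
  also have "\<dots> = (L ^^ Suc i) (\<lambda>t. first_tensor True ((R' ^^ Suc i) w0) t + C * first_tensor False ((R' ^^ i) w0) t) x0"
    unfolding L_def by (subst apply_op_pow_cong[OF raise]) simp_all
  also have "\<dots> = (L ^^ Suc i) (first_tensor True ((R' ^^ Suc i) w0)) x0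
      + C * (L ^^ Suc i) (first_tensor False ((R' ^^ i) w0)) x0"
    by (simp only: L_def apply_op_pow_lin)
  also have "\<dots> = zeta q u v us vs als (Suc i) + C * D * zeta q u v us vs als i"
    unfolding keep lower zeta_W by (simp add: x0_def del: funpow.simps)
  finally show ?thesis unfolding C_def D_def .
qed

text \<open>On the trivial module R acts as 0; by the recursion, zeta_i vanishes for i beyond
  the diameter.\<close>
lemma zeta_Nil: "zeta q u v us vs [] (Suc i) = (0::'a::field)"
proof -
  have "apply_op 0 (Rop q u v []) f = (\<lambda>t. 0)" for f :: "bool list \<Rightarrow> 'a"
    by (rule ext) (simp add: apply_op_def Rop_def)
  then have "(apply_op 0 (Rop q u v []) ^^ Suc i) (bvec []) = (\<lambda>t. 0)" by simp
  then show ?thesis by (simp add: zeta_def apply_op_pow_zero del: funpow.simps)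
qed

lemma zeta_vanish:
  assumes q: "q \<noteq> (0::'a::field)"
  shows "length als < i \<Longrightarrow> zeta q u v us vs als i = 0"
proof (induction als arbitrary: i)
  case Nil
  then obtain i' where "i = Suc i'" by (cases i) auto
  then show ?case by (simp add: zeta_Nil)
next
  case (Cons al als)
  then obtain i' where i: "i = Suc i'" by (cases i) auto
  have "zeta q u v us vs als (Suc i') = 0" "zeta q u v us vs als i' = 0"
    using Cons i by auto
  then show ?case unfolding i using zeta_Cons[OF q refl, of u v us vs al als i'] by simp
qed

lemma qint_geometric:
  fixes q :: "'a::field"
  assumes q: "q \<noteq> 0"
  shows "(q - inverse q) * (\<Sum>j<Suc i. (q^2)^j) = q^i * (q^Suc i - inverse q^Suc i)"
proof (induction i)
  case 0 then show ?case using q by (simp add: field_simps)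
next
  case (Suc i)
  define x where "x = q^i"
  have x: "x \<noteq> 0" using q by (simp add: x_def)
  have pw: "(q^2)^Suc i = q^2 * x^2" "q^Suc i = q * x" "q^Suc (Suc i) = q^2 * x"
    "inverse q^Suc i = inverse (q * x)" "inverse q^Suc (Suc i) = inverse (q^2 * x)"
    by (simp_all add: x_def power_mult_distrib[symmetric] power_mult[symmetric] power_inverse
        power2_eq_square mult_ac)
  have "(q - inverse q) * (\<Sum>j<Suc (Suc i). (q^2)^j)
      = (q - inverse q) * (\<Sum>j<Suc i. (q^2)^j) + (q - inverse q) * (q^2)^Suc i"
    by (simp only: sum.lessThan_Suc[of _ "Suc i"] distrib_left)
  also have "\<dots> = x * (q * x - inverse (q * x)) + (q - inverse q) * (q^2 * x^2)"
    by (simp only: Suc pw x_def)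
  also have "\<dots> = (q * x) * (q^2 * x - inverse (q^2 * x))"
    using q x by (simp add: field_simps power2_eq_square)
  finally show ?case by (simp only: pw)
qed

text \<open>Closed form of geo_coeff, from the identity above for q and for q^-1.\<close>
lemma geo_coeff_closed:
  fixes q :: "'a::field"
  assumes q: "q \<noteq> 0"
  shows "(q - inverse q) * geo_coeff q a b X Y i
       = (q^Suc i - inverse q^Suc i) * (a * q^i * X + b * inverse q^i * Y)"
proof -
  have up: "(q - inverse q) * (\<Sum>j<Suc i. (q^2)^j) = q^i * (q^Suc i - inverse q^Suc i)"
    by (rule qint_geometric[OF q])
  have "(inverse q - inverse (inverse q)) * (\<Sum>j<Suc i. (inverse q^2)^j)
      = inverse q^i * (inverse q^Suc i - inverse (inverse q)^Suc i)"
    by (rule qint_geometric) (use q in simp)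
  then have down: "(q - inverse q) * (\<Sum>j<Suc i. (inverse q^2)^j) = inverse q^i * (q^Suc i - inverse q^Suc i)"
    by (simp add: algebra_simps)
  have "(q - inverse q) * geo_coeff q a b X Y i
      = a * X * ((q - inverse q) * (\<Sum>j<Suc i. (q^2)^j)) + b * Y * ((q - inverse q) * (\<Sum>j<Suc i. (inverse q^2)^j))"
    unfolding geo_coeff_def by (simp add: sum.distrib sum_distrib_left algebra_simps)
  also have "\<dots> = (q^Suc i - inverse q^Suc i) * (a * q^i * X + b * inverse q^i * Y)"
    unfolding up down by (simp add: algebra_simps)
  finally show ?thesis .
qed

text \<open>theta k is the root of f_k, and factor_root al is the root contributed by V(al).\<close>
definition theta :: "'a::field \<Rightarrow> 'a \<Rightarrow> 'a \<Rightarrow> 'a \<Rightarrow> 'a \<Rightarrow> nat \<Rightarrow> 'a" where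
  "theta q b c bs cs k = b * bs * inverse q ^ (2 * k) + c * cs * q ^ (2 * k)"

definition factor_root :: "'a::field \<Rightarrow> 'a \<Rightarrow> 'a \<Rightarrow> 'a \<Rightarrow> 'a \<Rightarrow> 'a \<Rightarrow> 'a" where
  "factor_root q u v us vs al = (u*us*inverse q*al + v*vs*q^3*inverse al)/(q - inverse q)^2"

lemma factor_root_minus_theta:
  fixes q b c bs cs u v us vs al :: "'a::field"
  assumes q: "q \<noteq> 0" and q2: "q^2 \<noteq> 1" and al: "al \<noteq> 0"
    and uv: "u * vs = - b * bs * inverse q * (q - inverse q) ^ 2"
    and vu: "v * us = - c * cs * inverse q * (q - inverse q) ^ 2"
  shows "(u * inverse q * al * inverse (q^k) + v * q * q^k) * (us * q^k + vs * q * q * inverse al * inverse (q^k))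
       = (q - inverse q)^2 * (factor_root q u v us vs al - theta q b c bs cs k)"
proof -
  define \<kappa> where "\<kappa> = q^k"
  have nz: "\<kappa> \<noteq> 0" "q - inverse q \<noteq> 0"
    using q q2 by (auto simp: \<kappa>_def field_simps power2_eq_square)
  have pw: "inverse q ^ (2 * k) = inverse (\<kappa>^2)" "q ^ (2 * k) = \<kappa>^2"
    by (simp_all add: \<kappa>_def power_inverse power_mult[symmetric] mult.commute)
  have "(u * inverse q * al * inverse \<kappa> + v * q * \<kappa>) * (us * \<kappa> + vs * q * q * inverse al * inverse \<kappa>)
      = (u*us*inverse q*al + v*vs*q^3*inverse al) + (u * vs) * q * inverse (\<kappa>^2) + (v * us) * q * \<kappa>^2"
    using nz al by (simp add: field_simps power2_eq_square power3_eq_cube)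
  also have "\<dots> = (q - inverse q)^2 * (factor_root q u v us vs al - theta q b c bs cs k)"
    unfolding uv vu factor_root_def theta_def pw using nz q by (simp add: field_simps)
  finally show ?thesis unfolding \<kappa>_def .
qed

lemma geo_coeff_product:
  fixes q b c bs cs u v us vs al :: "'a::field"
  assumes q: "q \<noteq> 0" and q2: "q^2 \<noteq> 1" and al: "al \<noteq> 0"
    and uv: "u * vs = - b * bs * inverse q * (q - inverse q) ^ 2"
    and vu: "v * us = - c * cs * inverse q * (q - inverse q) ^ 2"
    and m: "m = i + k"
  shows "geo_coeff q (u * inverse q * al) (v * q) (inverse q^m) (q^m) i
       * geo_coeff q us (vs * q * q * inverse al) ((inverse q^2)^i * q^m) ((q^2)^i * inverse q^m) i
     = (q^Suc i - inverse q^Suc i)^2 * (factor_root q u v us vs al - theta q b c bs cs k)"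
proof -
  define n where "n = q^i"
  define \<kappa> where "\<kappa> = q^k"
  have nz: "n \<noteq> 0" "\<kappa> \<noteq> 0" "q - inverse q \<noteq> 0"
    using q q2 by (auto simp: n_def \<kappa>_def field_simps power2_eq_square)
  have pw: "q^m = n * \<kappa>" "inverse q^m = inverse (n * \<kappa>)" "inverse q^i = inverse n"
    "(q^2)^i = n^2" "(inverse q^2)^i = inverse (n^2)"
    by (simp_all add: m n_def \<kappa>_def power_add power_inverse power_mult[symmetric] mult.commute)
  define E where "E = q^Suc i - inverse q^Suc i"
  have raise: "(q - inverse q) * geo_coeff q (u * inverse q * al) (v * q) (inverse q^m) (q^m) i
      = E * (u * inverse q * al * inverse \<kappa> + v * q * \<kappa>)"
    unfolding geo_coeff_closed[OF q] E_def pw n_def[symmetric] using nz by (simp add: field_simps)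
  have lower: "(q - inverse q) * geo_coeff q us (vs * q * q * inverse al) ((inverse q^2)^i * q^m) ((q^2)^i * inverse q^m) i
      = E * (us * \<kappa> + vs * q * q * inverse al * inverse \<kappa>)"
    unfolding geo_coeff_closed[OF q] E_def pw n_def[symmetric] using nz by (simp add: field_simps power2_eq_square)
  have "(q - inverse q)^2 * (geo_coeff q (u * inverse q * al) (v * q) (inverse q^m) (q^m) i
       * geo_coeff q us (vs * q * q * inverse al) ((inverse q^2)^i * q^m) ((q^2)^i * inverse q^m) i)
     = ((q - inverse q) * geo_coeff q (u * inverse q * al) (v * q) (inverse q^m) (q^m) i)
       * ((q - inverse q) * geo_coeff q us (vs * q * q * inverse al) ((inverse q^2)^i * q^m) ((q^2)^i * inverse q^m) i)"
    by (simp add: power2_eq_square mult_ac)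
  also have "\<dots> = E^2 * ((u * inverse q * al * inverse \<kappa> + v * q * \<kappa>) * (us * \<kappa> + vs * q * q * inverse al * inverse \<kappa>))"
    unfolding raise lower by (simp add: power2_eq_square mult_ac)
  also have "\<dots> = E^2 * ((q - inverse q)^2 * (factor_root q u v us vs al - theta q b c bs cs k))"
    unfolding \<kappa>_def factor_root_minus_theta[OF q q2 al uv vu] ..
  finally show ?thesis using nz unfolding E_def by (simp add: mult.left_commute[of "(q - inverse q)^2"])
qed

section \<open>The recursion for sigma and the factorization of the Drinfel'd polynomial\<close>

lemma feasible_Suc: "feasible q (Suc m) \<Longrightarrow> feasible q m"
  unfolding feasible_def by auto

lemma qint_nonzero:
  assumes q: "q \<noteq> (0::'a::field)" and f: "q ^ (2 * n) \<noteq> 1"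
  shows "q ^ n - inverse q ^ n \<noteq> 0"
proof
  assume "q ^ n - inverse q ^ n = 0"
  then have "q ^ n * q ^ n = q ^ n * inverse q ^ n" by simp
  also have "\<dots> = 1" using q by (simp add: power_inverse)
  also have "q ^ n * q ^ n = q ^ (2 * n)" by (simp add: mult_2 power_add)
  finally show False using f by simp
qed

lemma sigma_Cons:
  fixes q b c bs cs u v us vs al :: "'a::field"
  assumes q: "q \<noteq> 0" and q2: "q^2 \<noteq> 1" and al: "al \<noteq> 0"
    and uv: "u * vs = - b * bs * inverse q * (q - inverse q) ^ 2"
    and vu: "v * us = - c * cs * inverse q * (q - inverse q) ^ 2"
    and feas: "feasible q (Suc m)" and m: "length als = m" and k: "k \<le> Suc m"
  shows "sigma q u v us vs (al # als) k = sigma q u v us vs als k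
     + (if k = 0 then 0
        else (factor_root q u v us vs al - theta q b c bs cs (Suc m - k)) * sigma q u v us vs als (k - 1))"
proof (cases k)
  case 0 then show ?thesis by (simp add: sigma_def zeta_0)
next
  case (Suc i)
  define E where "E = (q^(Suc i) - inverse q^(Suc i))^2"
  define g where "g = factor_root q u v us vs al - theta q b c bs cs (m - i)"
  define D where "D = (\<Prod>k=1..i. (q ^ k - inverse q ^ k) ^ 2)"
  have "Suc i \<in> {1..Suc m}" using k Suc by simp
  then have "q ^ (2 * Suc i) \<noteq> 1" using feas unfolding feasible_def by blast
  then have E: "E \<noteq> 0" using qint_nonzero[OF q] unfolding E_def by (simp del: power_Suc)
  have DE: "(\<Prod>k=1..Suc i. (q ^ k - inverse q ^ k) ^ 2) = D * E"
    unfolding D_def E_def by (simp add: prod.cl_ivl_Suc)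
  have z: "zeta q u v us vs (al # als) (Suc i) = zeta q u v us vs als (Suc i) + E * g * zeta q u v us vs als i"
    using zeta_Cons[OF q m, of u v us vs al i] geo_coeff_product[OF q q2 al uv vu, of m i "m - i"] k Suc
    unfolding E_def g_def by simp
  have "sigma q u v us vs (al # als) (Suc i) = (zeta q u v us vs als (Suc i) + E * g * zeta q u v us vs als i) / (D * E)"
    unfolding sigma_def DE z ..
  also have "\<dots> = sigma q u v us vs als (Suc i) + g * sigma q u v us vs als i"
    unfolding sigma_def DE D_def[symmetric] using E by (simp add: add_divide_distrib)
  finally show ?thesis using Suc by (simp add: g_def)
qed

lemma expansion_times_linear:
  fixes F :: "nat \<Rightarrow> 'a::field poly" and s s' th :: "nat \<Rightarrow> 'a"
  assumes F: "\<And>i. F (Suc i) = F i * [:th i, -1:]"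
    and rec: "\<And>k. k \<le> Suc m \<Longrightarrow> s' k = s k + (if k = 0 then 0 else (r - th (Suc m - k)) * s (k - 1))"
    and top: "s (Suc m) = 0"
  shows "(\<Sum>i=0..Suc m. smult (s' (Suc m - i)) (F i)) = (\<Sum>i=0..m. smult (s (m - i)) (F i)) * [:r, -1:]"
proof -
  have step: "smult (s (m - i)) (F (Suc i)) + smult ((r - th i) * s (m - i)) (F i)
      = smult (s (m - i)) (F i) * [:r, -1:]" for i
  proof -
    have split: "[:r, -1:] = [:th i, -1:] + [:r - th i:]" by simp
    have "smult (s (m - i)) (F i) * [:r, -1:]
        = smult (s (m - i)) (F i) * [:th i, -1:] + smult (s (m - i)) (F i) * [:r - th i:]"
      unfolding split by (rule distrib_left)
    also have "smult (s (m - i)) (F i) * [:r - th i:] = smult ((r - th i) * s (m - i)) (F i)"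
      by (simp add: mult.commute)
    also have "smult (s (m - i)) (F i) * [:th i, -1:] = smult (s (m - i)) (F (Suc i))"
      by (simp only: mult_smult_left F)
    finally show ?thesis by simp
  qed
  have "(\<Sum>i=0..Suc m. smult (s' (Suc m - i)) (F i))
      = (\<Sum>i=0..Suc m. smult (s (Suc m - i)) (F i))
        + (\<Sum>i=0..Suc m. if i = Suc m then 0 else smult ((r - th i) * s (m - i)) (F i))"
    unfolding sum.distrib[symmetric]
    by (rule sum.cong[OF refl]) (auto simp: rec smult_add_left Suc_diff_le)
  also have "(\<Sum>i=0..Suc m. smult (s (Suc m - i)) (F i)) = (\<Sum>i=0..m. smult (s (m - i)) (F (Suc i)))"
    by (subst sum.atLeast0_atMost_Suc_shift) (simp add: top)
  also have "(\<Sum>i=0..Suc m. if i = Suc m then 0 else smult ((r - th i) * s (m - i)) (F i))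
      = (\<Sum>i=0..m. smult ((r - th i) * s (m - i)) (F i))"
    by (subst sum.atLeast0_atMost_Suc) (auto intro!: sum.cong)
  also have "(\<Sum>i=0..m. smult (s (m - i)) (F (Suc i))) + (\<Sum>i=0..m. smult ((r - th i) * s (m - i)) (F i))
      = (\<Sum>i=0..m. smult (s (m - i)) (F i)) * [:r, -1:]"
    unfolding sum.distrib[symmetric] sum_distrib_right step ..
  finally show ?thesis .
qed

lemma drinfeld_poly_Cons:
  fixes q b c bs cs u v us vs al :: "'a::field"
  assumes q: "q \<noteq> 0" and q2: "q^2 \<noteq> 1" and al: "al \<noteq> 0"
    and uv: "u * vs = - b * bs * inverse q * (q - inverse q) ^ 2"
    and vu: "v * us = - c * cs * inverse q * (q - inverse q) ^ 2"
    and feas: "feasible q (length als + 1)"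
  shows "drinfeld_poly q b c bs cs u v us vs (al # als)
       = [:- factor_root q u v us vs al, 1:] * drinfeld_poly q b c bs cs u v us vs als"
proof -
  define m where "m = length als"
  define F where "F i = (\<Prod>j<i. fpoly q b c bs cs j)" for i
  define r where "r = factor_root q u v us vs al"
  define S where "S = (\<Sum>i=0..m. smult (sigma q u v us vs als (m - i)) (F i))"
  have expand: "(\<Sum>i=0..Suc m. smult (sigma q u v us vs (al # als) (Suc m - i)) (F i)) = S * [:r, -1:]"
    unfolding S_def
  proof (rule expansion_times_linear)
    show "F (Suc i) = F i * [:theta q b c bs cs i, -1:]" for i
      by (simp add: F_def fpoly_def theta_def)
    show "sigma q u v us vs (al # als) k = sigma q u v us vs als k
        + (if k = 0 then 0 else (r - theta q b c bs cs (Suc m - k)) * sigma q u v us vs als (k - 1))"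
      if "k \<le> Suc m" for k
      using sigma_Cons[OF q q2 al uv vu _ m_def[symmetric] that] feas unfolding r_def m_def by simp
    show "sigma q u v us vs als (Suc m) = 0"
      unfolding sigma_def using zeta_vanish[OF q, of als "Suc m"] by (simp add: m_def)
  qed
  have "drinfeld_poly q b c bs cs u v us vs (al # als)
      = smult ((-1)^Suc m) (\<Sum>i=0..Suc m. smult (sigma q u v us vs (al # als) (Suc m - i)) (F i))"
    unfolding drinfeld_poly_def Let_def F_def m_def by simp
  also have "\<dots> = smult ((-1)^Suc m) (smult (-1) (S * [:-r, 1:]))"
    unfolding expand by (simp only: mult_smult_right[symmetric]) simp
  also have "\<dots> = smult ((-1)^m) (S * [:-r, 1:])"
    by (simp only: smult_smult) simp
  also have "\<dots> = [:-r, 1:] * smult ((-1)^m) S"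
    by (simp only: mult_smult_right mult.commute)
  also have "smult ((-1)^m) S = drinfeld_poly q b c bs cs u v us vs als"
    unfolding drinfeld_poly_def Let_def S_def F_def m_def by simp
  finally show ?thesis unfolding r_def .
qed

lemma drinfeld_poly_Nil: "drinfeld_poly q b c bs cs u v us vs [] = (1::'a::field poly)"
  by (simp add: drinfeld_poly_def sigma_def zeta_0)

section \<open>Realizing an arbitrary monic polynomial\<close>

text \<open>Over an algebraically closed field every value z is r(al) for some al /= 0,
  since r(al) = z is a quadratic equation in al with nonzero constant term.\<close>
lemma factor_root_surj:
  fixes q u v us vs z :: "'a::field"
  assumes alg_closed: "\<forall>p :: 'a poly. degree p > 0 \<longrightarrow> (\<exists>z. poly p z = 0)"
    and q: "q \<noteq> 0" and c: "q - inverse q \<noteq> 0" and nz: "u * us \<noteq> 0" "v * vs \<noteq> 0"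
  obtains al where "al \<noteq> 0" "factor_root q u v us vs al = z"
proof -
  define p where "p = [: v * vs * q^3, - z * (q - inverse q)^2, u * us * inverse q :]"
  have "degree p = 2" unfolding p_def using nz q by simp
  then obtain al where "poly p al = 0" using alg_closed by fastforce
  then have root: "v * vs * q^3 + al * (- z * (q - inverse q)^2 + al * (u * us * inverse q)) = 0"
    unfolding p_def by simp
  have al: "al \<noteq> 0" using root nz q by auto
  have "factor_root q u v us vs al = z"
    unfolding factor_root_def using al c root q by (simp add: field_simps)
  with al show ?thesis by (rule that)
qed

lemma monic_linear_factor:
  fixes P :: "'a::field poly"
  assumes alg_closed: "\<forall>p :: 'a poly. degree p > 0 \<longrightarrow> (\<exists>z. poly p z = 0)"
    and monic: "lead_coeff P = 1" "degree P = Suc m"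
  obtains z Q where "P = [:-z, 1:] * Q" "lead_coeff Q = 1" "degree Q = m"
proof -
  obtain z where "poly P z = 0" using alg_closed monic(2) by (metis zero_less_Suc)
  then obtain Q where PQ: "P = [:-z, 1:] * Q" by (auto simp: poly_eq_0_iff_dvd elim: dvdE)
  then have "Q \<noteq> 0" using monic by auto
  then have "degree P = degree [:-z, 1:] + degree Q"
    unfolding PQ by (intro degree_mult_eq) auto
  moreover have "lead_coeff P = lead_coeff [:-z, 1:] * lead_coeff Q"
    unfolding PQ by (rule lead_coeff_mult)
  ultimately show ?thesis using PQ monic by (intro that) auto
qed

theorem proposition7p16:
  fixes q b c bs cs u v us vs :: "'a::field" and d :: nat and P :: "'a poly"
  assumes alg_closed: "\<forall>p :: 'a poly. degree p > 0 \<longrightarrow> (\<exists>z. poly p z = 0)"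
    and q: "q \<noteq> 0" "q ^ 2 \<noteq> 1"
    and nz: "b \<noteq> 0" "c \<noteq> 0" "bs \<noteq> 0" "cs \<noteq> 0"
    and uv: "u * vs = - b * bs * inverse q * (q - inverse q) ^ 2"
    and vu: "v * us = - c * cs * inverse q * (q - inverse q) ^ 2"
    and feas: "feasible q d"
    and monic: "lead_coeff P = 1" "degree P = d"
  shows "\<exists>als :: 'a list. length als = d \<and> (\<forall>al\<in>set als. al \<noteq> 0) \<and>
           drinfeld_poly q b c bs cs u v us vs als = P"
proof -
  have cq: "q - inverse q \<noteq> 0" using q by (simp add: field_simps power2_eq_square)
  have "u * vs \<noteq> 0" "v * us \<noteq> 0" unfolding uv vu using nz q cq by simp_all
  then have nz_uv: "u * us \<noteq> 0" "v * vs \<noteq> 0" by auto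
  show ?thesis using feas monic
  proof (induction d arbitrary: P)
    case 0
    then have "P = 1" by (metis degree_0_id one_pCons)
    then show ?case by (auto simp: drinfeld_poly_Nil)
  next
    case (Suc m)
    obtain z Q where PQ: "P = [:-z, 1:] * Q" and Q: "lead_coeff Q = 1" "degree Q = m"
      using monic_linear_factor[OF alg_closed Suc.prems(2-3)] .
    obtain als where als: "length als = m" "\<forall>al\<in>set als. al \<noteq> 0"
        "drinfeld_poly q b c bs cs u v us vs als = Q"
      using Suc.IH[OF feasible_Suc[OF Suc.prems(1)] Q] by blast
    obtain al where al: "al \<noteq> 0" "factor_root q u v us vs al = z"
      using factor_root_surj[OF alg_closed q(1) cq nz_uv] .
    have "drinfeld_poly q b c bs cs u v us vs (al # als) = P"
      using drinfeld_poly_Cons[OF q al(1) uv vu] Suc.prems(1) als al(2) PQ by simp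
    with als al show ?case by (intro exI[of _ "al # als"]) auto
  qed
qed

end
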